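(* Let $G$ be a weakly-reversible chemical reaction network and $U_G$ the network obtained by making every reaction reversible. Then $U_G$ and $G$ have the same siphons, and the same critical siphons.
   Context: A chemical reaction network (CRN) consists of positive integers $s,n$, a finite directed graph $G$ with vertex set $\{1,\dots,n\}$ and edge set $E(G)$, and an injective labeling of vertex $i$ by a monic monomial $\psi_i=\prod_{j=1}^s x_j^{y_{ij}}$, $y_i=(y_{i1},\dots,y_{is})$. $G$ is weakly-reversible iff each connected component is strongly connected. $U_G$ is the CRN with the same vertices and labeling and edge set $\{(i,j) : (i,j)\in E(G)\text{ or }(j,i)\in E(G)\}$. The stoichiometric subspace of a CRN is the span of $\{y_i-y_j:(i,j)\text{ an edge}\}$, and for $x\in\mathbb{R}^s_{\ge0}$ the invariant polyhedron containing $x$ is $(x+S)\cap\mathbb{R}^s_{\ge0}$. A nonempty $Z\subseteq\{1,\dots,s\}$ is a siphon iff for every edge $(i,j)$, if $x_k\mid\psi_j$ for some $k\in Z$ then $x_l\mid\psi_i$ for some $l\in Z$. A siphon $Z$ is critical iff there is $z\in\mathbb{R}^s_{\ge0}$ with $Z=\{i:z_i=0\}$ such that the invariant polyhedron containing $z$ meets $\mathbb{R}^s_{>0}$. *)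

theory Defs
  imports "HOL-Analysis.Analysis"
begin

text \<open>A CRN: s species (indices 1..s), n complexes (vertices 1..n), edge set E,
  and exponent vectors y i k (exponent of x_k in the monomial labelling vertex i).
  Injectivity of the monomial labelling = distinct exponent vectors on 1..s.\<close>

definition crn :: "nat \<Rightarrow> nat \<Rightarrow> (nat \<times> nat) set \<Rightarrow> (nat \<Rightarrow> nat \<Rightarrow> nat) \<Rightarrow> bool" where
  "crn s n E y \<longleftrightarrow> 0 < s \<and> 0 < n \<and> E \<subseteq> {1..n} \<times> {1..n} \<and>
     (\<forall>i\<in>{1..n}. \<forall>j\<in>{1..n}. i \<noteq> j \<longrightarrow> (\<exists>k\<in>{1..s}. y i k \<noteq> y j k))"

definition weakly_reversible :: "nat \<Rightarrow> (nat \<times> nat) set \<Rightarrow> bool" where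
  "weakly_reversible n E \<longleftrightarrow>
     (\<forall>u\<in>{1..n}. \<forall>v\<in>{1..n}. (u, v) \<in> (E \<union> E\<inverse>)\<^sup>* \<longrightarrow> (u, v) \<in> E\<^sup>* \<and> (v, u) \<in> E\<^sup>*)"

definition undirect :: "(nat \<times> nat) set \<Rightarrow> (nat \<times> nat) set" where
  "undirect E = {(i, j). (i, j) \<in> E \<or> (j, i) \<in> E}"

text \<open>Stoichiometric subspace: the span of the vectors y_i - y_j, (i,j) an edge
  (E is finite, so the span is the set of linear combinations indexed by E).
  Vectors in R^s are functions nat => real, only coordinates 1..s are relevant.\<close>
definition stoich_space :: "(nat \<times> nat) set \<Rightarrow> (nat \<Rightarrow> nat \<Rightarrow> nat) \<Rightarrow> (nat \<Rightarrow> real) set" where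
  "stoich_space E y = {(\<lambda>k. \<Sum>e\<in>E. c e * (real (y (fst e) k) - real (y (snd e) k))) | c. True}"

definition siphon :: "nat \<Rightarrow> (nat \<times> nat) set \<Rightarrow> (nat \<Rightarrow> nat \<Rightarrow> nat) \<Rightarrow> nat set \<Rightarrow> bool" where
  "siphon s E y Z \<longleftrightarrow> Z \<noteq> {} \<and> Z \<subseteq> {1..s} \<and>
     (\<forall>(i, j)\<in>E. (\<exists>k\<in>Z. 0 < y j k) \<longrightarrow> (\<exists>l\<in>Z. 0 < y i l))"

definition critical_siphon :: "nat \<Rightarrow> (nat \<times> nat) set \<Rightarrow> (nat \<Rightarrow> nat \<Rightarrow> nat) \<Rightarrow> nat set \<Rightarrow> bool" where
  "critical_siphon s E y Z \<longleftrightarrow> siphon s E y Z \<and>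
     (\<exists>z :: nat \<Rightarrow> real. (\<forall>k\<in>{1..s}. 0 \<le> z k) \<and> Z = {k\<in>{1..s}. z k = 0} \<and>
        (\<exists>x v. v \<in> stoich_space E y \<and> (\<forall>k\<in>{1..s}. x k = z k + v k \<and> 0 < x k)))"

end

theory Submission
  imports Defs
begin

text \<open>The siphon condition for an edge \<open>i \<rightarrow> j\<close> propagates backwards along directed paths.
  In a weakly reversible network the reverse \<open>j \<rightarrow> i\<close> of every reaction is realised by a
  directed path from \<open>j\<close> to \<open>i\<close>, so adding reverse reactions creates no new siphon
  constraint. Reversing a reaction only negates its reaction vector, so the stoichiometric
  subspace is unchanged as well; criticality depends on nothing else.\<close>

definition reaction_vector :: "(nat \<Rightarrow> nat \<Rightarrow> nat) \<Rightarrow> nat \<times> nat \<Rightarrow> nat \<Rightarrow> real" where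
  "reaction_vector y e = (\<lambda>k. real (y (fst e) k) - real (y (snd e) k))"

lemma reaction_vector_swap: "reaction_vector y (prod.swap e) = (\<lambda>k. - reaction_vector y e k)"
  by (simp add: reaction_vector_def)

lemma stoich_space_iff:
  "v \<in> stoich_space E y \<longleftrightarrow> (\<exists>c. v = (\<lambda>k. \<Sum>e\<in>E. c e * reaction_vector y e k))"
  by (simp add: stoich_space_def reaction_vector_def)

lemma stoich_space_zero: "(\<lambda>k. 0) \<in> stoich_space E y"
  unfolding stoich_space_iff by (rule exI[of _ "\<lambda>_. 0"]) simp

lemma stoich_space_add:
  assumes "u \<in> stoich_space E y" and "v \<in> stoich_space E y"
  shows "(\<lambda>k. u k + v k) \<in> stoich_space E y"
proof -
  obtain c d where "u = (\<lambda>k. \<Sum>e\<in>E. c e * reaction_vector y e k)"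
    and "v = (\<lambda>k. \<Sum>e\<in>E. d e * reaction_vector y e k)"
    using assms unfolding stoich_space_iff by blast
  then show ?thesis
    unfolding stoich_space_iff
    by (intro exI[of _ "\<lambda>e. c e + d e"]) (simp add: sum.distrib distrib_right)
qed

lemma stoich_space_scale:
  assumes "u \<in> stoich_space E y"
  shows "(\<lambda>k. a * u k) \<in> stoich_space E y"
proof -
  obtain c where "u = (\<lambda>k. \<Sum>e\<in>E. c e * reaction_vector y e k)"
    using assms unfolding stoich_space_iff by blast
  then show ?thesis
    unfolding stoich_space_iff
    by (intro exI[of _ "\<lambda>e. a * c e"]) (simp add: sum_distrib_left mult.assoc)
qed

lemma reaction_vector_in_stoich_space:
  assumes "finite E" and "e \<in> E"
  shows "reaction_vector y e \<in> stoich_space E y"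
proof -
  have "reaction_vector y e k = (\<Sum>e'\<in>E. (if e' = e then 1 else 0) * reaction_vector y e' k)" for k
    using assms by (simp add: sum.delta' if_distrib[where f="\<lambda>a. a * _"] cong: if_cong)
  then show ?thesis
    unfolding stoich_space_iff by (intro exI[of _ "\<lambda>e'. if e' = e then 1 else 0"]) (rule ext)
qed

lemma stoich_space_subset:
  assumes "finite A" and "\<And>e. e \<in> A \<Longrightarrow> reaction_vector y e \<in> stoich_space B y"
  shows "stoich_space A y \<subseteq> stoich_space B y"
proof
  fix v assume "v \<in> stoich_space A y"
  then obtain c where v: "v = (\<lambda>k. \<Sum>e\<in>A. c e * reaction_vector y e k)"
    unfolding stoich_space_iff by blast
  have "(\<lambda>k. \<Sum>e\<in>A'. c e * reaction_vector y e k) \<in> stoich_space B y" if "A' \<subseteq> A" for A'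
    using finite_subset[OF that \<open>finite A\<close>] that
  proof (induction A' rule: finite_induct)
    case empty
    show ?case using stoich_space_zero by simp
  next
    case (insert e A')
    then show ?case
      using stoich_space_add[OF stoich_space_scale[OF assms(2)]] by simp
  qed
  then show "v \<in> stoich_space B y"
    unfolding v by blast
qed

lemma undirect_eq: "undirect E = E \<union> E\<inverse>"
  unfolding undirect_def by auto

lemma stoich_space_undirect:
  assumes "finite E"
  shows "stoich_space (undirect E) y = stoich_space E y"
proof
  show "stoich_space (undirect E) y \<subseteq> stoich_space E y"
  proof (rule stoich_space_subset)
    show "finite (undirect E)" using assms by (simp add: undirect_eq)
  next
    fix e assume "e \<in> undirect E"
    then consider "e \<in> E" | "prod.swap e \<in> E"
      unfolding undirect_eq by (cases e) auto
    then show "reaction_vector y e \<in> stoich_space E y"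
    proof cases
      case 1
      then show ?thesis by (rule reaction_vector_in_stoich_space[OF assms])
    next
      case 2
      have "(\<lambda>k. - reaction_vector y (prod.swap e) k) \<in> stoich_space E y"
        using stoich_space_scale[OF reaction_vector_in_stoich_space[OF assms 2], where a="-1"]
        by simp
      then show ?thesis
        by (simp add: reaction_vector_swap)
    qed
  qed
next
  show "stoich_space E y \<subseteq> stoich_space (undirect E) y"
    using assms
    by (intro stoich_space_subset reaction_vector_in_stoich_space) (auto simp: undirect_eq)
qed

lemma siphon_rtrancl:
  assumes "siphon s E y Z" and "(i, j) \<in> E\<^sup>*" and "\<exists>k\<in>Z. 0 < y j k"
  shows "\<exists>l\<in>Z. 0 < y i l"
  using assms(2,3)
proof (induction rule: converse_rtrancl_induct)
  case base
  then show ?case .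
next
  case (step a b)
  then show ?case using assms(1) unfolding siphon_def by blast
qed

lemma siphon_undirect_iff:
  assumes "E \<subseteq> {1..n} \<times> {1..n}" and "weakly_reversible n E"
  shows "siphon s (undirect E) y Z \<longleftrightarrow> siphon s E y Z"
proof
  assume "siphon s (undirect E) y Z"
  then show "siphon s E y Z"
    unfolding siphon_def undirect_eq by blast
next
  assume S: "siphon s E y Z"
  have "(i, j) \<in> E\<^sup>*" if "(j, i) \<in> E" for i j
  proof -
    have "i \<in> {1..n}" and "j \<in> {1..n}" using that assms(1) by auto
    moreover have "(j, i) \<in> (E \<union> E\<inverse>)\<^sup>*" using that by auto
    ultimately show ?thesis
      using assms(2) unfolding weakly_reversible_def by blast
  qed
  then show "siphon s (undirect E) y Z"
    using S siphon_rtrancl[OF S] unfolding siphon_def undirect_eq by blast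
qed

theorem lemma4p4:
  fixes s n :: nat and E :: "(nat \<times> nat) set" and y :: "nat \<Rightarrow> nat \<Rightarrow> nat"
  assumes "crn s n E y" and "weakly_reversible n E"
  shows "(\<forall>Z. siphon s (undirect E) y Z \<longleftrightarrow> siphon s E y Z) \<and>
         (\<forall>Z. critical_siphon s (undirect E) y Z \<longleftrightarrow> critical_siphon s E y Z)"
proof -
  have E_vertices: "E \<subseteq> {1..n} \<times> {1..n}"
    using assms(1) unfolding crn_def by blast
  then have "finite E"
    by (rule finite_subset) simp
  have siphons: "siphon s (undirect E) y Z \<longleftrightarrow> siphon s E y Z" for Z
    using E_vertices assms(2) by (rule siphon_undirect_iff)
  moreover have "stoich_space (undirect E) y = stoich_space E y"
    using \<open>finite E\<close> by (rule stoich_space_undirect)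
  ultimately show ?thesis
    unfolding critical_siphon_def by simp
qed

end
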